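(* Let $q$ be a mean-field Gamma variational distribution over positive latent variables $\alpha_{v_i},\rho_{e_j},\theta_{v_ik},\beta_{e_jk}$ (all mutually independent under $q$, each Gamma distributed), and let $\lambda_{v_ie_j}=\alpha_{v_i}\rho_{e_j}\sum_{k=1}^K\theta_{v_ik}\beta_{e_jk}$. Define $T_{v_ie_j}:=\mathbb{E}_q[\log(1-e^{-\lambda_{v_ie_j}})]$ and $S_{v_ie_j}:=\mathbb{E}_q[\log\lambda_{v_ie_j}]$. Then $$T_{v_ie_j}\ \ge\ -\mathbb{E}_q[\lambda_{v_ie_j}]+\log\Big(\exp\big(\exp(S_{v_ie_j})\big)-1\Big).$$ *)

theory Defs
  imports "HOL-Probability.Probability"
begin

definition gamma_density :: "real \<Rightarrow> real \<Rightarrow> real \<Rightarrow> real" where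
  "gamma_density a b x =
     (if x > 0 then b powr a * x powr (a - 1) * exp (- b * x) / Gamma a else 0)"

datatype ('v, 'e) latent = Alpha 'v | Rho 'e | Theta 'v nat | Beta 'e nat

definition latent_index :: "'v set \<Rightarrow> 'e set \<Rightarrow> nat \<Rightarrow> ('v, 'e) latent set" where
  "latent_index V E K =
     Alpha ` V \<union> Rho ` E \<union>
     {Theta v k | v k. v \<in> V \<and> k \<in> {1..K}} \<union>
     {Beta e k | e k. e \<in> E \<and> k \<in> {1..K}}"

definition q_meanfield ::
  "'v set \<Rightarrow> 'e set \<Rightarrow> nat \<Rightarrow> (('v,'e) latent \<Rightarrow> real) \<Rightarrow> (('v,'e) latent \<Rightarrow> real)
     \<Rightarrow> (('v,'e) latent \<Rightarrow> real) measure" where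
  "q_meanfield V E K a b =
     PiM (latent_index V E K) (\<lambda>l. density lborel (gamma_density (a l) (b l)))"

definition lam :: "nat \<Rightarrow> 'v \<Rightarrow> 'e \<Rightarrow> (('v,'e) latent \<Rightarrow> real) \<Rightarrow> real" where
  "lam K v e \<omega> = \<omega> (Alpha v) * \<omega> (Rho e) * (\<Sum>k = 1..K. \<omega> (Theta v k) * \<omega> (Beta e k))"

end

theory Submission
  imports Defs
begin

text \<open>For \<open>x > 0\<close> one has \<open>ln (1 - e\<^sup>-\<^sup>x) = - x + f (ln x)\<close> with
  \<open>f u = ln (exp (e\<^sup>u) - 1)\<close>. The function \<open>f\<close> is convex: its derivative is \<open>g (e\<^sup>u)\<close> for the
  increasing function \<open>g t = t e\<^sup>t / (e\<^sup>t - 1)\<close>. Jensen's inequality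
  \<open>E f (ln \<lambda>) \<ge> f (E ln \<lambda>)\<close> is then the claim. What remains is integrability: \<open>\<lambda>\<close> is a sum of
  products of independent Gamma variables, each of finite mean, and \<open>ln \<lambda>\<close> lies between \<open>\<lambda>\<close> and
  the logarithm of the single monomial \<open>\<alpha>\<^sub>v \<rho>\<^sub>e \<theta>\<^sub>v\<^sub>1 \<beta>\<^sub>e\<^sub>1\<close>, a sum of
  logarithms of Gamma variables, which are integrable.\<close>

section \<open>The Gamma distribution\<close>

abbreviation gamma_measure :: "real \<Rightarrow> real \<Rightarrow> real measure" where
  "gamma_measure a b \<equiv> density lborel (gamma_density a b)"

lemma borel_measurable_gamma_density[measurable]: "gamma_density a b \<in> borel_measurable borel"
  unfolding gamma_density_def by measurable

lemma gamma_density_nonneg: "a > 0 \<Longrightarrow> b > 0 \<Longrightarrow> gamma_density a b x \<ge> 0"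
  unfolding gamma_density_def by auto

lemma nn_integral_gamma_density:
  assumes a: "a > 0" and b: "b > 0"
  shows "(\<integral>\<^sup>+x. gamma_density a b x \<partial>lborel) = 1"
proof -
  define g where "g t = indicator {0..} t * t powr (a - 1) / exp t" for t :: real
  have [measurable]: "g \<in> borel_measurable borel" unfolding g_def by measurable
  have Gamma_pos: "Gamma a > 0" using Gamma_real_pos[OF a] .
  have rescale: "ennreal b * ennreal (g (b * x)) = ennreal (Gamma a) * gamma_density a b x" for x
  proof -
    have "b * g (b * x) = Gamma a * gamma_density a b x"
      using b Gamma_pos
      by (auto simp: g_def gamma_density_def indicator_def powr_mult powr_diff exp_minus field_simps zero_le_mult_iff)
    then show ?thesis using b Gamma_pos by (metis ennreal_mult' less_imp_le)
  qed
  have "ennreal (Gamma a) = (\<integral>\<^sup>+t. g t \<partial>lborel)"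
    using Gamma_conv_nn_integral_real[OF a] by (simp add: g_def)
  also have "\<dots> = b * (\<integral>\<^sup>+x. g (b * x) \<partial>lborel)"
    using b nn_integral_real_affine[of "\<lambda>t. ennreal (g t)" b 0] by (simp add: g_def)
  also have "\<dots> = (\<integral>\<^sup>+x. ennreal b * g (b * x) \<partial>lborel)"
    by (rule nn_integral_cmult[symmetric]) measurable
  also have "\<dots> = (\<integral>\<^sup>+x. ennreal (Gamma a) * gamma_density a b x \<partial>lborel)"
    by (simp only: rescale)
  also have "\<dots> = Gamma a * (\<integral>\<^sup>+x. gamma_density a b x \<partial>lborel)"
    by (rule nn_integral_cmult) measurable
  finally have "(\<integral>\<^sup>+x. gamma_density a b x \<partial>lborel) * ennreal (Gamma a) = 1 * ennreal (Gamma a)"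
    by (simp add: mult.commute)
  then show ?thesis
    using Gamma_pos by (simp only: mult_right_ennreal_cancel) simp
qed

lemma prob_space_gamma_measure: "a > 0 \<Longrightarrow> b > 0 \<Longrightarrow> prob_space (gamma_measure a b)"
  by (rule prob_spaceI) (simp add: emeasure_density nn_integral_gamma_density)

lemma integrable_gamma_density: "a > 0 \<Longrightarrow> b > 0 \<Longrightarrow> integrable lborel (gamma_density a b)"
  by (rule integrableI_nonneg) (auto simp: gamma_density_nonneg nn_integral_gamma_density)

lemma AE_gamma_measure_pos: "AE x in gamma_measure a b. x > 0"
  by (subst AE_density) (auto simp: gamma_density_def)

lemma gamma_density_mult_powr:
  assumes a: "a > 0" and b: "b > 0" and ap: "a + p > 0"
  shows "gamma_density a b x * x powr p = Gamma (a + p) / (Gamma a * b powr p) * gamma_density (a + p) b x"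
proof (cases "x > 0")
  case True
  have "x powr (a + p - 1) = x powr (a - 1) * x powr p"
    using True by (simp add: powr_add[symmetric] algebra_simps)
  moreover have "Gamma a \<noteq> 0" "Gamma (a + p) \<noteq> 0"
    using Gamma_real_pos[OF a] Gamma_real_pos[OF ap] by auto
  ultimately show ?thesis
    using True b by (simp add: gamma_density_def powr_add field_simps)
qed (simp add: gamma_density_def)

lemma integrable_gamma_measure_powr:
  assumes a: "a > 0" and b: "b > 0" and ap: "a + p > 0"
  shows "integrable (gamma_measure a b) (\<lambda>x. x powr p)"
proof -
  have "integrable lborel (\<lambda>x. Gamma (a + p) / (Gamma a * b powr p) * gamma_density (a + p) b x)"
    using integrable_gamma_density[OF ap b] by simp
  then have "integrable lborel (\<lambda>x. gamma_density a b x *\<^sub>R x powr p)"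
    using gamma_density_mult_powr[OF a b ap] by simp
  then show ?thesis
    by (subst integrable_density) (auto simp: gamma_density_nonneg a b)
qed

lemma integrable_gamma_measure_id:
  assumes "a > 0" and "b > 0"
  shows "integrable (gamma_measure a b) (\<lambda>x. x)"
proof -
  have "integrable (gamma_measure a b) (\<lambda>x. x powr 1)"
    using assms by (intro integrable_gamma_measure_powr) auto
  then show ?thesis
    by (rule integrable_cong_AE_imp) (use AE_gamma_measure_pos[of a b] in \<open>auto elim!: AE_mp\<close>)
qed

lemma abs_ln_le_add_powr:
  fixes x c :: real
  assumes x: "x > 0" and c: "c > 0"
  shows "\<bar>ln x\<bar> \<le> x + x powr (- c) / c"
proof (cases "x \<ge> 1")
  case True
  then have "\<bar>ln x\<bar> \<le> x"
    using x ln_le_minus_one[of x] by simp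
  moreover have "x powr (- c) / c \<ge> 0"
    using c by simp
  ultimately show ?thesis by linarith
next
  case False
  have "c * - ln x = ln (x powr (- c))"
    using x by (simp add: ln_powr)
  also have "\<dots> \<le> x powr (- c)"
    using ln_le_minus_one[of "x powr (- c)"] x by simp
  finally have "\<bar>ln x\<bar> \<le> x powr (- c) / c"
    using False x c by (simp add: field_simps)
  then show ?thesis using x by linarith
qed

text \<open>Near 0, \<open>ln\<close> is dominated by the negative moment of order \<open>a/2\<close>, which is finite.\<close>
lemma integrable_gamma_measure_ln:
  assumes a: "a > 0" and b: "b > 0"
  shows "integrable (gamma_measure a b) ln"
proof (rule Bochner_Integration.integrable_bound)
  show "integrable (gamma_measure a b) (\<lambda>x. x + x powr (- (a / 2)) / (a / 2))"
    using integrable_gamma_measure_powr[OF a b, of "- (a / 2)"] integrable_gamma_measure_id[OF a b] a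
    by simp
  show "AE x in gamma_measure a b. norm (ln x) \<le> norm (x + x powr (- (a / 2)) / (a / 2))"
    using AE_gamma_measure_pos
  proof (rule AE_mp, intro AE_I2 impI)
    fix x :: real
    assume "x > 0"
    then show "norm (ln x) \<le> norm (x + x powr (- (a / 2)) / (a / 2))"
      using abs_ln_le_add_powr[of x "a / 2"] a by simp
  qed
qed simp

section \<open>Jensen's inequality for \<open>ln (1 - exp (- X))\<close>\<close>

lemma mult_exp_div_exp_minus_one_mono:
  fixes s t :: real
  assumes s: "0 < s" and st: "s \<le> t"
  shows "s * exp s / (exp s - 1) \<le> t * exp t / (exp t - 1)"
proof (rule DERIV_nonneg_imp_nondecreasing[OF st], intro exI conjI)
  fix x :: real
  assume "s \<le> x" "x \<le> t"
  then have "exp x - 1 > 0" using s by simp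
  then show "DERIV (\<lambda>t. t * exp t / (exp t - 1)) x :> exp x * (exp x - 1 - x) / (exp x - 1)\<^sup>2"
    by (auto intro!: derivative_eq_intros simp: field_simps power2_eq_square)
  have "exp x - 1 - x \<ge> 0"
    using exp_ge_add_one_self[of x] by linarith
  then show "0 \<le> exp x * (exp x - 1 - x) / (exp x - 1)\<^sup>2"
    by simp
qed

lemma convex_on_ln_exp_exp_minus_one: "convex_on UNIV (\<lambda>u::real. ln (exp (exp u) - 1))"
proof (rule convex_on_realI[where f' = "\<lambda>u. exp u * exp (exp u) / (exp (exp u) - 1)"])
  fix x :: real
  have "exp (exp x) - 1 > 0" by simp
  then show "((\<lambda>u. ln (exp (exp u) - 1)) has_real_derivative exp x * exp (exp x) / (exp (exp x) - 1)) (at x)"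
    by (auto intro!: derivative_eq_intros simp: field_simps)
next
  fix x y :: real
  assume "x \<le> y"
  then show "exp x * exp (exp x) / (exp (exp x) - 1) \<le> exp y * exp (exp y) / (exp (exp y) - 1)"
    by (intro mult_exp_div_exp_minus_one_mono) auto
qed simp

lemma ln_one_minus_exp_neg:
  fixes x :: real
  assumes "x > 0"
  shows "ln (1 - exp (- x)) = ln (exp x - 1) - x"
proof -
  have "1 - exp (- x) = exp (- x) * (exp x - 1)"
    by (simp add: exp_minus field_simps)
  then show ?thesis
    using assms by (simp add: ln_mult)
qed

lemma ln_le_ln_exp_minus_one:
  fixes x :: real
  assumes "x > 0"
  shows "ln x \<le> ln (exp x - 1)"
proof -
  have "x \<le> exp x - 1"
    using exp_ge_add_one_self[of x] by linarith
  then show ?thesis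
    using assms by simp
qed

lemma ln_exp_minus_one_le:
  fixes x :: real
  assumes x: "x > 0"
  shows "ln (exp x - 1) \<le> ln x + x"
proof -
  have "1 - x \<le> exp (- x)"
    using exp_ge_add_one_self[of "- x"] by linarith
  then have "exp x * (1 - x) \<le> exp x * exp (- x)"
    by (intro mult_left_mono) auto
  then have "exp x - 1 \<le> x * exp x"
    by (simp add: exp_minus algebra_simps)
  then have "ln (exp x - 1) \<le> ln (x * exp x)"
    using x by simp
  then show ?thesis
    using x by (simp add: ln_mult)
qed

lemma (in prob_space) expectation_ln_one_minus_exp_neg_ge:
  fixes X :: "'a \<Rightarrow> real"
  assumes pos: "AE \<omega> in M. X \<omega> > 0"
    and int_X: "integrable M X" and int_ln_X: "integrable M (\<lambda>\<omega>. ln (X \<omega>))"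
  shows "expectation (\<lambda>\<omega>. ln (1 - exp (- X \<omega>))) \<ge>
    - expectation X + ln (exp (exp (expectation (\<lambda>\<omega>. ln (X \<omega>)))) - 1)"
proof -
  define f where "f u = ln (exp (exp u) - 1)" for u :: real
  have [measurable]: "X \<in> borel_measurable M"
    using int_X by simp
  have f_ln: "f (ln x) = ln (exp x - 1)" if "x > 0" for x
    using that by (simp add: f_def)
  have int_f: "integrable M (\<lambda>\<omega>. f (ln (X \<omega>)))"
  proof (rule Bochner_Integration.integrable_bound)
    show "integrable M (\<lambda>\<omega>. \<bar>ln (X \<omega>)\<bar> + X \<omega>)"
      using int_ln_X int_X by (intro Bochner_Integration.integrable_add integrable_abs)
    show "AE \<omega> in M. norm (f (ln (X \<omega>))) \<le> norm (\<bar>ln (X \<omega>)\<bar> + X \<omega>)"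
      using pos
    proof (rule AE_mp, intro AE_I2 impI)
      fix \<omega>
      assume X: "X \<omega> > 0"
      then show "norm (f (ln (X \<omega>))) \<le> norm (\<bar>ln (X \<omega>)\<bar> + X \<omega>)"
        using ln_le_ln_exp_minus_one[OF X] ln_exp_minus_one_le[OF X]
        by (simp only: f_ln real_norm_def)
    qed
  qed (simp add: f_def)
  have "expectation (\<lambda>\<omega>. ln (1 - exp (- X \<omega>))) = expectation (\<lambda>\<omega>. f (ln (X \<omega>)) - X \<omega>)"
    using pos by (intro integral_cong_AE) (auto elim!: AE_mp simp: ln_one_minus_exp_neg f_ln f_def)
  also have "\<dots> = expectation (\<lambda>\<omega>. f (ln (X \<omega>))) - expectation X"
    using int_f int_X by simp
  finally show ?thesis
    using jensens_inequality[OF int_ln_X _ _ int_f, of UNIV] convex_on_ln_exp_exp_minus_one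
    by (simp add: f_def)
qed

section \<open>The mean-field Gamma distribution\<close>

lemma integrable_ln_of_le:
  fixes X Y :: "'a \<Rightarrow> real"
  assumes le: "AE \<omega> in M. 0 < Y \<omega> \<and> Y \<omega> \<le> X \<omega>"
    and int_X: "integrable M X" and int_ln_Y: "integrable M (\<lambda>\<omega>. ln (Y \<omega>))"
  shows "integrable M (\<lambda>\<omega>. ln (X \<omega>))"
proof (rule Bochner_Integration.integrable_bound)
  show "integrable M (\<lambda>\<omega>. \<bar>X \<omega>\<bar> + \<bar>ln (Y \<omega>)\<bar>)"
    using int_X int_ln_Y by (intro Bochner_Integration.integrable_add integrable_abs)
  show "AE \<omega> in M. norm (ln (X \<omega>)) \<le> norm (\<bar>X \<omega>\<bar> + \<bar>ln (Y \<omega>)\<bar>)"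
    using le
  proof (rule AE_mp, intro AE_I2 impI)
    fix \<omega>
    assume "0 < Y \<omega> \<and> Y \<omega> \<le> X \<omega>"
    then have "ln (Y \<omega>) \<le> ln (X \<omega>)" and "ln (X \<omega>) \<le> X \<omega> - 1"
      by (auto intro: ln_le_minus_one)
    then show "norm (ln (X \<omega>)) \<le> norm (\<bar>X \<omega>\<bar> + \<bar>ln (Y \<omega>)\<bar>)"
      by auto
  qed
  show "(\<lambda>\<omega>. ln (X \<omega>)) \<in> borel_measurable M"
    using int_X by measurable
qed

lemma (in product_prob_space) integrable_PiM_prod_subset:
  fixes g :: "'i \<Rightarrow> 'a \<Rightarrow> real"
  assumes "finite I" and "J \<subseteq> I" and "\<And>j. j \<in> J \<Longrightarrow> integrable (M j) (g j)"
  shows "integrable (PiM I M) (\<lambda>\<omega>. \<Prod>j\<in>J. g j (\<omega> j))"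
proof -
  have "integrable (PiM I M) (\<lambda>\<omega>. \<Prod>i\<in>I. (if i \<in> J then g i else (\<lambda>_. 1)) (\<omega> i))"
    using assms by (intro product_integrable_prod) auto
  moreover have "(\<Prod>i\<in>I. (if i \<in> J then g i else (\<lambda>_. 1)) (\<omega> i)) = (\<Prod>j\<in>J. g j (\<omega> j))" for \<omega>
    using assms(1,2) by (intro prod.mono_neutral_cong_right) auto
  ultimately show ?thesis by simp
qed

lemma product_prob_space_gamma_measure:
  assumes "\<And>l. a l > 0" and "\<And>l. b l > 0"
  shows "product_prob_space (\<lambda>l. gamma_measure (a l) (b l))"
  unfolding product_prob_space_def product_prob_space_axioms_def product_sigma_finite_def
  using assms prob_space_gamma_measure prob_space_imp_sigma_finite by blast

lemma finite_latent_index: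
  assumes "finite V" and "finite E"
  shows "finite (latent_index V E K)"
proof -
  have Theta_eq: "{Theta v k | v k. v \<in> V \<and> k \<in> {1..K}} = (\<lambda>(v, k). Theta v k) ` (V \<times> {1..K})"
    and Beta_eq: "{Beta e k | e k. e \<in> E \<and> k \<in> {1..K}} = (\<lambda>(e, k). Beta e k) ` (E \<times> {1..K})"
    by auto
  show ?thesis
    unfolding latent_index_def Theta_eq Beta_eq using assms by auto
qed

lemma q_meanfield_cong:
  assumes "\<And>l. l \<in> latent_index V E K \<Longrightarrow> a l = a' l \<and> b l = b' l"
  shows "q_meanfield V E K a b = q_meanfield V E K a' b'"
  unfolding q_meanfield_def using assms by (intro PiM_cong) auto

lemma monomial_pos_le_lam:
  fixes \<omega> :: "('v, 'e) latent \<Rightarrow> real"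
  assumes pos: "\<forall>l\<in>latent_index V E K. \<omega> l > 0" and "K \<ge> 1" and "v \<in> V" and "e \<in> E"
  shows "0 < \<omega> (Alpha v) * \<omega> (Rho e) * \<omega> (Theta v 1) * \<omega> (Beta e 1)"
    and "\<omega> (Alpha v) * \<omega> (Rho e) * \<omega> (Theta v 1) * \<omega> (Beta e 1) \<le> lam K v e \<omega>"
proof -
  have in_index: "Alpha v \<in> latent_index V E K" "Rho e \<in> latent_index V E K"
    "\<And>k. k \<in> {1..K} \<Longrightarrow> Theta v k \<in> latent_index V E K \<and> Beta e k \<in> latent_index V E K"
    using assms(2-4) by (auto simp: latent_index_def)
  with pos \<open>K \<ge> 1\<close> show "0 < \<omega> (Alpha v) * \<omega> (Rho e) * \<omega> (Theta v 1) * \<omega> (Beta e 1)"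
    by simp
  have "\<omega> (Theta v 1) * \<omega> (Beta e 1) \<le> (\<Sum>k = 1..K. \<omega> (Theta v k) * \<omega> (Beta e k))"
    using pos in_index \<open>K \<ge> 1\<close> by (intro member_le_sum) (auto intro: less_imp_le)
  with pos in_index show "\<omega> (Alpha v) * \<omega> (Rho e) * \<omega> (Theta v 1) * \<omega> (Beta e 1) \<le> lam K v e \<omega>"
    unfolding lam_def by (simp add: mult.assoc mult_left_mono)
qed

context
  fixes V :: "'v set" and E :: "'e set" and K :: nat and a b :: "('v, 'e) latent \<Rightarrow> real"
  assumes finite_V: "finite V" and finite_E: "finite E"
    and a_pos: "\<And>l. a l > 0" and b_pos: "\<And>l. b l > 0"
begin

interpretation product_prob_space "\<lambda>l. gamma_measure (a l) (b l)" "latent_index V E K"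
  using a_pos b_pos by (rule product_prob_space_gamma_measure)

lemma prob_space_q_meanfield: "prob_space (q_meanfield V E K a b)"
  unfolding q_meanfield_def by (rule P.prob_space_axioms)

lemma integrable_q_meanfield_prod:
  fixes g :: "('v, 'e) latent \<Rightarrow> real \<Rightarrow> real"
  assumes "J \<subseteq> latent_index V E K" and "\<And>j. j \<in> J \<Longrightarrow> integrable (gamma_measure (a j) (b j)) (g j)"
  shows "integrable (q_meanfield V E K a b) (\<lambda>\<omega>. \<Prod>j\<in>J. g j (\<omega> j))"
  unfolding q_meanfield_def
  using finite_latent_index[OF finite_V finite_E] assms by (rule integrable_PiM_prod_subset)

lemma integrable_q_meanfield_coordinate:
  fixes g :: "real \<Rightarrow> real"
  assumes "l \<in> latent_index V E K" and "integrable (gamma_measure (a l) (b l)) g"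
  shows "integrable (q_meanfield V E K a b) (\<lambda>\<omega>. g (\<omega> l))"
  using integrable_q_meanfield_prod[of "{l}" "\<lambda>_. g"] assms by simp

lemma borel_measurable_q_meanfield_coordinate:
  assumes "l \<in> latent_index V E K"
  shows "(\<lambda>\<omega>. \<omega> l) \<in> borel_measurable (q_meanfield V E K a b)"
  using integrable_q_meanfield_coordinate[OF assms integrable_gamma_measure_id[OF a_pos b_pos]] by simp

lemma AE_q_meanfield_pos: "AE \<omega> in q_meanfield V E K a b. \<forall>l\<in>latent_index V E K. \<omega> l > 0"
  unfolding q_meanfield_def
  by (intro AE_finite_allI finite_latent_index finite_V finite_E AE_component AE_gamma_measure_pos)

lemma lam_eq_sum_prod:
  fixes \<omega> :: "('v, 'e) latent \<Rightarrow> real"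
  shows "lam K v e \<omega> = (\<Sum>k = 1..K. \<Prod>l\<in>{Alpha v, Rho e, Theta v k, Beta e k}. \<omega> l)"
  unfolding lam_def sum_distrib_left by (intro sum.cong) (auto simp: mult_ac)

lemma integrable_lam:
  assumes "v \<in> V" and "e \<in> E"
  shows "integrable (q_meanfield V E K a b) (lam K v e)"
  unfolding lam_eq_sum_prod using assms a_pos b_pos
  by (intro Bochner_Integration.integrable_sum integrable_q_meanfield_prod)
     (auto simp: latent_index_def integrable_gamma_measure_id)

lemma AE_lam_pos:
  assumes "K \<ge> 1" and "v \<in> V" and "e \<in> E"
  shows "AE \<omega> in q_meanfield V E K a b. lam K v e \<omega> > 0"
  using AE_q_meanfield_pos
  by (rule AE_mp) (use monomial_pos_le_lam[OF _ assms] in \<open>force intro!: AE_I2\<close>)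

lemma integrable_ln_lam:
  assumes "K \<ge> 1" and "v \<in> V" and "e \<in> E"
  shows "integrable (q_meanfield V E K a b) (\<lambda>\<omega>. ln (lam K v e \<omega>))"
proof -
  let ?m = "\<lambda>\<omega>. \<omega> (Alpha v) * \<omega> (Rho e) * \<omega> (Theta v 1) * \<omega> (Beta e 1)"
  have in_index: "{Alpha v, Rho e, Theta v 1, Beta e 1} \<subseteq> latent_index V E K"
    using assms by (auto simp: latent_index_def)
  have "AE \<omega> in q_meanfield V E K a b. 0 < ?m \<omega> \<and> ?m \<omega> \<le> lam K v e \<omega>"
    using AE_q_meanfield_pos
    by (rule AE_mp) (use monomial_pos_le_lam[OF _ assms] in \<open>auto intro!: AE_I2\<close>)
  moreover have "integrable (q_meanfield V E K a b) (\<lambda>\<omega>. ln (?m \<omega>))"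
  proof (rule integrable_cong_AE_imp)
    show "integrable (q_meanfield V E K a b)
        (\<lambda>\<omega>. ln (\<omega> (Alpha v)) + ln (\<omega> (Rho e)) + ln (\<omega> (Theta v 1)) + ln (\<omega> (Beta e 1)))"
      using in_index a_pos b_pos
      by (intro Bochner_Integration.integrable_add integrable_q_meanfield_coordinate
          integrable_gamma_measure_ln) auto
    show "AE \<omega> in q_meanfield V E K a b.
        ln (\<omega> (Alpha v)) + ln (\<omega> (Rho e)) + ln (\<omega> (Theta v 1)) + ln (\<omega> (Beta e 1)) = ln (?m \<omega>)"
      using AE_q_meanfield_pos by (rule AE_mp) (use in_index in \<open>auto intro!: AE_I2 simp: ln_mult\<close>)
  qed (measurable, (rule borel_measurable_q_meanfield_coordinate, use in_index in blast)+)
  ultimately show ?thesis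
    by (rule integrable_ln_of_le[OF _ integrable_lam[OF assms(2,3)]])
qed

end

theorem theorem1:
  fixes V :: "'v set" and E :: "'e set" and K :: nat
    and a b :: "('v,'e) latent \<Rightarrow> real" and v :: 'v and e :: 'e
  assumes "finite V" and "finite E" and "K \<ge> 1"
    and "v \<in> V" and "e \<in> E"
    and "\<And>l. l \<in> latent_index V E K \<Longrightarrow> a l > 0"
    and "\<And>l. l \<in> latent_index V E K \<Longrightarrow> b l > 0"
  defines "T \<equiv> (\<integral>\<omega>. ln (1 - exp (- lam K v e \<omega>)) \<partial>q_meanfield V E K a b)"
    and "S \<equiv> (\<integral>\<omega>. ln (lam K v e \<omega>) \<partial>q_meanfield V E K a b)"
  shows "T \<ge> - (\<integral>\<omega>. lam K v e \<omega> \<partial>q_meanfield V E K a b) + ln (exp (exp S) - 1)"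
proof -
  \<comment> \<open>\<open>product_prob_space\<close> requires every factor to be a probability space, also outside the index set.\<close>
  define a' where "a' l = (if l \<in> latent_index V E K then a l else 1)" for l
  define b' where "b' l = (if l \<in> latent_index V E K then b l else 1)" for l
  have pos: "a' l > 0" "b' l > 0" for l
    using assms(6,7) by (auto simp: a'_def b'_def)
  have q: "q_meanfield V E K a b = q_meanfield V E K a' b'"
    by (rule q_meanfield_cong) (simp add: a'_def b'_def)
  interpret prob_space "q_meanfield V E K a' b'"
    using assms(1,2) pos by (rule prob_space_q_meanfield)
  show ?thesis
    unfolding T_def S_def q
    using assms(1-5) pos
    by (intro expectation_ln_one_minus_exp_neg_ge AE_lam_pos integrable_lam integrable_ln_lam)
qed

end
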